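(* Let $I$ be a non-empty finite set and, in the setting described in the context, let $r\in R$, $k\in I$ and $s\in\mathbb{N}$. Then the class $$S^{(r)}_{k,s}(I)=\bigcap_{n=1}^\infty E^{(r)}_{n,k,s}(I),\qquad E^{(r)}_{n,k,s}(I)=\{f\in A(\Omega):\operatorname{Re}(f\circ\phi_r)\restriction_{\mathbb{T}^I}\in D_{n,k,s}(I)\},$$ is dense in $A(\Omega)$.
   Context: For each $i\in I$, $\Omega_i\subset\mathbb{C}$ is a bounded domain whose boundary consists of $k_i$ disjoint Jordan curves; $V_{i,j}$, $j\in\{0,\dots,k_i-1\}$, are the connected components of $\hat{\mathbb{C}}\setminus\overline{\Omega_i}$, $\Omega_{i,j}=\hat{\mathbb{C}}\setminus\overline{V_{i,j}}$, and $\phi_{i,j}:\overline{D}\to\overline{\Omega_{i,j}}$ are fixed Riemann mappings (homeomorphisms of the closed unit disc onto the closure in $\hat{\mathbb{C}}$, conformal from $D$ onto $\Omega_{i,j}$). $\Omega=\prod_{i\in I}\Omega_i$, $\overline{\Omega}=\prod_{i\in I}\overline{\Omega_i}$ with the product topology. $A(\Omega)$ is the space of functions $f:\overline{\Omega}\to\mathbb{C}$ that are continuous on $\overline{\Omega}$ and separately holomorphic on $\Omega$ (holomorphic in each variable $z_{i_0}\in\Omega_{i_0}$ when the others are fixed), with the supremum norm. $R=\prod_{i\in I}\{0,\dots,k_i-1\}$, and for $r=(r_i)\in R$, $\phi_r:\overline{D}^I\to\prod_{i\in I}\overline{\Omega_{i,r_i}}$, $(z_i)\mapsto(\phi_{i,r_i}(z_i))$.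 Functions on $\mathbb{T}^I$ are identified with functions on $\mathbb{R}^I$ that are $2\pi$-periodic in each coordinate via $\theta\mapsto(e^{i\theta_j})_{j\in I}$. For $n,s\in\mathbb{N}$, $k\in I$, $D_{n,k,s}(I)$ is the set of real continuous $u$ on $\mathbb{T}^I$ such that for every $\theta\in\mathbb{R}^I$ and every $v\in\mathbb{R}^I$ with $\frac1s\le|v_k|\le s$ and $|v_j|\le s$ for all $j\in I$, there exists $y$ in the segment $\{\theta+tv:-\frac1n<t<\frac1n\}$ with $|u(\theta)-u(y)|>n\|y-\theta\|_\infty$. *)

theory Defs
  imports "HOL-Complex_Analysis.Complex_Analysis"
begin

definition sup_norm_fin :: "('i::finite \<Rightarrow> real) \<Rightarrow> real" where
  "sup_norm_fin x = Max (range (\<lambda>j. \<bar>x j\<bar>))"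

definition jordan_curve :: "(real \<Rightarrow> complex) \<Rightarrow> bool" where
  "jordan_curve g \<longleftrightarrow> simple_path g \<and> pathfinish g = pathstart g"

definition bdd_domain_jordan_bdry :: "complex set \<Rightarrow> nat \<Rightarrow> bool" where
  "bdd_domain_jordan_bdry U m \<longleftrightarrow> open U \<and> connected U \<and> U \<noteq> {} \<and> bounded U \<and>
     (\<exists>\<gamma>::nat \<Rightarrow> real \<Rightarrow> complex.
        (\<forall>j<m. jordan_curve (\<gamma> j)) \<and>
        (\<forall>j<m. \<forall>l<m. j \<noteq> l \<longrightarrow> path_image (\<gamma> j) \<inter> path_image (\<gamma> l) = {}) \<and>
        frontier U = (\<Union>j<m. path_image (\<gamma> j)))"

text \<open>Riemann map of the closed disc onto the closure (in the Riemann sphere) of a domain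
  W of the Riemann sphere, where W is represented by its finite part U = W \<inter> C.  If U is unbounded
  (infinity in W), there is a unique point p of the open disc sent to infinity: phi is
  a continuous injection of the punctured closed disc onto closure U (in C), holomorphic
  from the punctured open disc onto U, and phi z tends to infinity as z tends to p.\<close>
definition riemann_map_closed :: "(complex \<Rightarrow> complex) \<Rightarrow> complex set \<Rightarrow> bool" where
  "riemann_map_closed \<phi> U \<longleftrightarrow>
     (bounded U \<longrightarrow>
        continuous_on (cball 0 1) \<phi> \<and> inj_on \<phi> (cball 0 1) \<and>
        \<phi> ` cball 0 1 = closure U \<and> \<phi> holomorphic_on ball 0 1 \<and> \<phi> ` ball 0 1 = U) \<and>
     (\<not> bounded U \<longrightarrow>
        (\<exists>p\<in>ball 0 1.
           continuous_on (cball 0 1 - {p}) \<phi> \<and> inj_on \<phi> (cball 0 1 - {p}) \<and>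
           \<phi> ` (cball 0 1 - {p}) = closure U \<and> \<phi> holomorphic_on (ball 0 1 - {p}) \<and>
           \<phi> ` (ball 0 1 - {p}) = U \<and> filterlim \<phi> at_infinity (at p)))"

definition A_space :: "('i \<Rightarrow> complex set) \<Rightarrow> (('i \<Rightarrow> complex) \<Rightarrow> complex) set" where
  "A_space \<Omega> = {f. continuous_on (Pi UNIV (\<lambda>i. closure (\<Omega> i))) f \<and>
      (\<forall>z \<in> Pi UNIV \<Omega>. \<forall>i0. (\<lambda>w. f (z(i0 := w))) holomorphic_on \<Omega> i0)}"

text \<open>D_{n,k,s}(I): real continuous functions on T^I (= 2pi-periodic functions on R^I).\<close>
definition D_set :: "nat \<Rightarrow> 'i::finite \<Rightarrow> nat \<Rightarrow> (('i \<Rightarrow> real) \<Rightarrow> real) set" where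
  "D_set n k s = {u. continuous_on UNIV u \<and>
      (\<forall>\<theta> j. u (\<theta>(j := \<theta> j + 2 * pi)) = u \<theta>) \<and>
      (\<forall>\<theta> v. (1 / real s \<le> \<bar>v k\<bar> \<and> \<bar>v k\<bar> \<le> real s \<and> (\<forall>j. \<bar>v j\<bar> \<le> real s)) \<longrightarrow>
         (\<exists>t. - 1 / real n < t \<and> t < 1 / real n \<and>
            (let y = (\<lambda>j. \<theta> j + t * v j) in
               \<bar>u \<theta> - u y\<bar> > real n * sup_norm_fin (\<lambda>j. y j - \<theta> j))))}"

definition phi_r_T :: "('i \<Rightarrow> nat \<Rightarrow> complex \<Rightarrow> complex) \<Rightarrow> ('i \<Rightarrow> nat) \<Rightarrow> ('i \<Rightarrow> real) \<Rightarrow> ('i \<Rightarrow> complex)" where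
  "phi_r_T \<phi> r \<theta> = (\<lambda>i. \<phi> i (r i) (exp (\<i> * complex_of_real (\<theta> i))))"

definition E_set where
  "E_set \<Omega> \<phi> r n k s =
     {f \<in> A_space \<Omega>. (\<lambda>\<theta>. Re (f (phi_r_T \<phi> r \<theta>))) \<in> D_set n k s}"

definition S_set where
  "S_set \<Omega> \<phi> r k s = (\<Inter>n\<in>{1..}. E_set \<Omega> \<phi> r n k s)"

end

theory Submission
  imports Defs
begin

text \<open>Let \<open>\<psi>\<close> invert the Riemann map \<open>\<phi> k (r k)\<close> on the closure of \<open>\<Omega> k\<close> and let
  \<open>G w = (\<Sum>j. c j * w ^ M j)\<close> be a lacunary power series with \<open>c j = \<epsilon>/2 * (1/4)^j\<close>, so that
  \<open>|G| \<le> 2\<epsilon>/3\<close> on the closed disc.  Then \<open>g z = f z + G (\<psi> (z k))\<close> lies in \<open>A(\<Omega>)\<close>, and on the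
  torus \<open>Re (g \<circ> \<phi>\<^sub>r)\<close> is the boundary function of \<open>f\<close> plus the Weierstrass-type function
  \<open>(\<Sum>j. c j * cos (M j * \<theta> k))\<close>.  Choose the frequencies recursively, each \<open>M n\<close> large compared
  with \<open>n\<close>, \<open>s\<close>, the earlier terms and the modulus of continuity of the boundary function of \<open>f\<close>.
  Then along every admissible direction the \<open>n\<close>-th cosine oscillates by \<open>2 c n\<close> within a step much
  shorter than \<open>1/n\<close>, which no \<open>n\<close>-Lipschitz bound can absorb; so \<open>g\<close> lies in every \<open>E\<^sub>n\<close>.\<close>

section \<open>Angles and the torus\<close>

lemma abs_cos_diff_le: "\<bar>cos (a::real) - cos b\<bar> \<le> \<bar>a - b\<bar>"
proof -
  have "\<bar>cos a - cos b\<bar> = 2 * \<bar>sin ((a + b) / 2)\<bar> * \<bar>sin ((b - a) / 2)\<bar>"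
    by (simp add: cos_diff_cos abs_mult)
  also have "\<dots> \<le> 2 * 1 * \<bar>(b - a) / 2\<bar>"
    by (intro mult_mono abs_sin_x_le_abs_x) auto
  finally show ?thesis by simp
qed

lemma abs_sin_diff_le: "\<bar>sin (a::real) - sin b\<bar> \<le> \<bar>a - b\<bar>"
proof -
  have "\<bar>sin a - sin b\<bar> = 2 * \<bar>sin ((a - b) / 2)\<bar> * \<bar>cos ((a + b) / 2)\<bar>"
    by (simp add: sin_diff_sin abs_mult)
  also have "\<dots> \<le> 2 * \<bar>(a - b) / 2\<bar> * 1"
    by (intro mult_mono abs_sin_x_le_abs_x) auto
  finally show ?thesis by simp
qed

lemma norm_cis_diff_le: "cmod (cis a - cis b) \<le> 2 * \<bar>a - b\<bar>"
proof -
  have "cmod (cis a - cis b) \<le> \<bar>Re (cis a - cis b)\<bar> + \<bar>Im (cis a - cis b)\<bar>"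
    by (rule cmod_le)
  also have "\<dots> \<le> \<bar>a - b\<bar> + \<bar>a - b\<bar>"
    using abs_cos_diff_le[of a b] abs_sin_diff_le[of a b] by simp
  finally show ?thesis by simp
qed

lemma abs_le_sup_norm_fin: "\<bar>x j\<bar> \<le> sup_norm_fin (x :: 'i::finite \<Rightarrow> real)"
  unfolding sup_norm_fin_def by (rule Max_ge) auto

lemma sup_norm_fin_le: "(\<And>j. \<bar>x j\<bar> \<le> B) \<Longrightarrow> sup_norm_fin (x :: 'i::finite \<Rightarrow> real) \<le> B"
  unfolding sup_norm_fin_def by (subst Max_le_iff) auto

lemma sup_norm_fin_scale_le:
  fixes v :: "'i::finite \<Rightarrow> real"
  assumes "\<And>j. \<bar>v j\<bar> \<le> s"
  shows "sup_norm_fin (\<lambda>j. t * v j) \<le> \<bar>t\<bar> * s"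
  by (rule sup_norm_fin_le) (simp add: abs_mult mult_left_mono assms)

lemma compact_torus: "compact (Pi UNIV (\<lambda>i::'i::finite. sphere (0::complex) 1))"
proof -
  have "compactin (product_topology (\<lambda>_. euclidean) UNIV) (PiE UNIV (\<lambda>i::'i. sphere (0::complex) 1))"
    by (simp add: compactin_PiE)
  then show ?thesis
    by (simp add: euclidean_product_topology PiE_UNIV_domain)
qed

text \<open>The metric on \<open>'i \<Rightarrow> complex\<close> is the countable-product metric, which is controlled by
  finitely many coordinates (\<open>dist_fun_le_dist_first_terms\<close>).\<close>
lemma uniformly_continuous_on_torus_angles:
  fixes F :: "('i::finite \<Rightarrow> complex) \<Rightarrow> real"
  assumes cF: "continuous_on (Pi UNIV (\<lambda>i. sphere 0 1)) F" and e: "e > 0"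
  shows "\<exists>d>0. \<forall>\<theta> \<theta>'. sup_norm_fin (\<lambda>j. \<theta>' j - \<theta> j) < d \<longrightarrow>
           \<bar>F (\<lambda>i. cis (\<theta> i)) - F (\<lambda>i. cis (\<theta>' i))\<bar> < e"
proof -
  have "uniformly_continuous_on (Pi UNIV (\<lambda>i::'i. sphere (0::complex) 1)) F"
    using compact_uniformly_continuous[OF cF compact_torus] .
  then obtain d1 where d1: "d1 > 0" and
    d1p: "\<And>x x'. x \<in> Pi UNIV (\<lambda>i. sphere 0 1) \<Longrightarrow> x' \<in> Pi UNIV (\<lambda>i. sphere 0 1) \<Longrightarrow>
          dist x' x < d1 \<Longrightarrow> dist (F x') (F x) < e"
    unfolding uniformly_continuous_on_def using e by metis
  obtain N :: nat where N: "(1/2::real)^N < d1/2"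
    using real_arch_pow_inv[of "d1/2" "1/2"] d1 by auto
  show ?thesis
  proof (intro exI[of _ "d1/8"] conjI allI impI)
    show "d1/8 > 0" using d1 by simp
    fix \<theta> \<theta>' :: "'i \<Rightarrow> real"
    assume close: "sup_norm_fin (\<lambda>j. \<theta>' j - \<theta> j) < d1/8"
    let ?x = "\<lambda>i. cis (\<theta> i)" and ?x' = "\<lambda>i. cis (\<theta>' i)"
    have "dist (?x' j) (?x j) \<le> d1/4" for j
    proof -
      have "dist (?x' j) (?x j) \<le> 2 * \<bar>\<theta>' j - \<theta> j\<bar>"
        using norm_cis_diff_le[of "\<theta>' j" "\<theta> j"] by (simp add: dist_norm)
      also have "\<dots> \<le> 2 * sup_norm_fin (\<lambda>j. \<theta>' j - \<theta> j)"
        using abs_le_sup_norm_fin[of "\<lambda>j. \<theta>' j - \<theta> j" j] by simp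
      finally show ?thesis using close by simp
    qed
    then have "Max {dist (?x' (from_nat n)) (?x (from_nat n)) |n. n \<le> N} \<le> d1/4"
      by (subst Max_le_iff) auto
    then have "dist ?x' ?x < d1"
      using dist_fun_le_dist_first_terms[of ?x' ?x N] N by linarith
    then have "dist (F ?x') (F ?x) < e"
      by (intro d1p) auto
    then show "\<bar>F ?x - F ?x'\<bar> < e" by (simp add: dist_real_def abs_minus_commute)
  qed
qed

section \<open>Lacunary cosine series\<close>

definition lacunary_cos :: "(nat \<Rightarrow> real) \<Rightarrow> (nat \<Rightarrow> nat) \<Rightarrow> real \<Rightarrow> real" where
  "lacunary_cos c M x = (\<Sum>j. c j * cos (real (M j) * x))"

lemma lacunary_cos_diff_estimate:
  fixes c :: "nat \<Rightarrow> real" and M :: "nat \<Rightarrow> nat"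
  assumes cnn: "\<And>j. c j \<ge> 0" and sc: "summable c" and tail: "(\<Sum>j. c (j + Suc n)) \<le> c n / 3"
  shows "\<bar>lacunary_cos c M a - lacunary_cos c M b - c n * (cos (real (M n) * a) - cos (real (M n) * b))\<bar>
         \<le> (\<Sum>j<n. c j * real (M j)) * \<bar>a - b\<bar> + 2 * c n / 3"
proof -
  have sc_tail: "summable (\<lambda>j. c (j + Suc n))" using sc by (rule summable_ignore_initial_segment)
  have sa: "summable (\<lambda>j. c j * cos (real (M j) * x))" for x
    by (rule summable_comparison_test'[OF sc]) (simp add: abs_mult cnn mult_left_le)
  define d where "d j = c j * (cos (real (M j) * a) - cos (real (M j) * b))" for j
  have sd: "summable d"
    unfolding d_def using summable_diff[OF sa sa] by (simp add: right_diff_distrib)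
  have "lacunary_cos c M a - lacunary_cos c M b = suminf d"
    unfolding d_def lacunary_cos_def using suminf_diff[OF sa sa] by (simp add: right_diff_distrib)
  also have "\<dots> = (\<Sum>j. d (j + Suc n)) + sum d {..<Suc n}"
    by (rule suminf_split_initial_segment[OF sd])
  finally have split: "lacunary_cos c M a - lacunary_cos c M b
      - c n * (cos (real (M n) * a) - cos (real (M n) * b)) = (\<Sum>j. d (j + Suc n)) + sum d {..<n}"
    by (simp add: d_def)
  have "\<bar>\<Sum>j. d (j + Suc n)\<bar> \<le> (\<Sum>j. 2 * c (j + Suc n))"
  proof -
    have "norm (\<Sum>j. d (j + Suc n)) \<le> (\<Sum>j. 2 * c (j + Suc n))"
    proof (rule norm_suminf_le)
      fix j
      have "\<bar>cos (real (M (j + Suc n)) * a) - cos (real (M (j + Suc n)) * b)\<bar> \<le> 2"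
        using abs_cos_le_one[of "real (M (j + Suc n)) * a"] abs_cos_le_one[of "real (M (j + Suc n)) * b"]
        by linarith
      then show "norm (d (j + Suc n)) \<le> 2 * c (j + Suc n)"
        unfolding d_def using cnn[of "j + Suc n"]
        by (simp add: abs_mult mult.commute) (metis mult.commute mult_left_mono)
    qed (rule summable_mult[OF sc_tail])
    then show ?thesis by simp
  qed
  also have "\<dots> \<le> 2 * c n / 3"
    using suminf_mult[OF sc_tail, of 2] tail by simp
  finally have head: "\<bar>\<Sum>j. d (j + Suc n)\<bar> \<le> 2 * c n / 3" .
  have "\<bar>sum d {..<n}\<bar> \<le> (\<Sum>j<n. \<bar>d j\<bar>)" by (rule sum_abs)
  also have "\<dots> \<le> (\<Sum>j<n. c j * real (M j) * \<bar>a - b\<bar>)"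
  proof (rule sum_mono)
    fix j
    have "\<bar>cos (real (M j) * a) - cos (real (M j) * b)\<bar> \<le> \<bar>real (M j) * a - real (M j) * b\<bar>"
      by (rule abs_cos_diff_le)
    also have "\<dots> = real (M j) * \<bar>a - b\<bar>" by (simp add: abs_mult right_diff_distrib[symmetric])
    finally show "\<bar>d j\<bar> \<le> c j * real (M j) * \<bar>a - b\<bar>"
      unfolding d_def using cnn[of j] by (simp add: abs_mult mult.assoc mult_left_mono)
  qed
  also have "\<dots> = (\<Sum>j<n. c j * real (M j)) * \<bar>a - b\<bar>"
    by (simp add: sum_distrib_right)
  finally show ?thesis unfolding split using head by linarith
qed

lemma lacunary_cos_oscillation:
  fixes c :: "nat \<Rightarrow> real" and M :: "nat \<Rightarrow> nat"
  assumes "\<And>j. c j \<ge> 0" "summable c" "(\<Sum>j. c (j + Suc n)) \<le> c n / 3"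
    and "cos (real (M n) * a) = 1" "cos (real (M n) * b) = -1"
    and "(\<Sum>j<n. c j * real (M j)) * \<bar>a - b\<bar> \<le> c n / 3"
  shows "c n \<le> lacunary_cos c M a - lacunary_cos c M b"
  using lacunary_cos_diff_estimate[OF assms(1-3), of M a b] assms(4-6) by (simp add: abs_le_iff)

lemma geometric_weights:
  fixes \<epsilon> :: real
  defines "c \<equiv> \<lambda>j::nat. \<epsilon>/2 * (1/4)^j"
  shows "summable c" "suminf c = 2 * \<epsilon>/3" "(\<Sum>j. c (j + Suc n)) = c n / 3"
proof -
  have s4: "summable (\<lambda>j. (1/4::real)^j)" by (rule summable_geometric) simp
  have S4: "(\<Sum>j. (1/4::real)^j) = 4/3" using suminf_geometric[of "1/4::real"] by simp
  show "summable c" unfolding c_def by (rule summable_mult[OF s4])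
  show "suminf c = 2 * \<epsilon>/3" unfolding c_def using suminf_mult[OF s4, of "\<epsilon>/2"] S4 by simp
  have tail: "c (j + Suc n) = (c n / 4) * (1/4)^j" for j
    unfolding c_def by (simp add: power_add)
  show "(\<Sum>j. c (j + Suc n)) = c n / 3"
    unfolding tail using suminf_mult[OF s4, of "c n / 4"] S4 by simp
qed

text \<open>Round \<open>(m a + z) / 2\<pi>\<close> to the nearest integer and solve for \<open>t\<close>.\<close>
lemma exists_short_step_cos_eq_1:
  fixes m a \<beta> s z :: real
  assumes m: "m > 0" and \<beta>: "1/s \<le> \<bar>\<beta>\<bar>" and s: "s > 0"
  shows "\<exists>t. \<bar>t\<bar> * \<bar>\<beta>\<bar> \<le> pi / m \<and> \<bar>t\<bar> \<le> pi * s / m \<and> cos (m * (a + t * \<beta>) + z) = 1"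
proof -
  have \<beta>0: "\<beta> \<noteq> 0" using \<beta> s by auto
  define x where "x = (m * a + z) / (2 * pi)"
  define q where "q = round x"
  have qx: "\<bar>of_int q - x\<bar> \<le> 1/2" unfolding q_def by (rule of_int_round_abs_le)
  define t where "t = (2 * pi * of_int q - (m * a + z)) / (m * \<beta>)"
  have angle: "m * (a + t * \<beta>) + z = 2 * pi * of_int q"
    unfolding t_def using m \<beta>0 by (simp add: field_simps)
  have "2 * pi * of_int q - (m * a + z) = 2 * pi * (of_int q - x)"
    unfolding x_def by (simp add: field_simps)
  then have "\<bar>2 * pi * of_int q - (m * a + z)\<bar> = 2 * pi * \<bar>of_int q - x\<bar>"
    by (simp add: abs_mult)
  also have "\<dots> \<le> pi" using qx by (simp add: mult_left_le)
  finally have "\<bar>2 * pi * of_int q - (m * a + z)\<bar> \<le> pi" .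
  moreover have "\<bar>t\<bar> * \<bar>\<beta>\<bar> = \<bar>2 * pi * of_int q - (m * a + z)\<bar> / m"
    unfolding t_def using m \<beta>0 by (simp add: abs_mult abs_divide)
  ultimately have t\<beta>: "\<bar>t\<bar> * \<bar>\<beta>\<bar> \<le> pi / m"
    using m by (simp add: divide_right_mono)
  have "1 \<le> s * \<bar>\<beta>\<bar>" using \<beta> s by (simp add: field_simps)
  then have "\<bar>t\<bar> \<le> \<bar>t\<bar> * (s * \<bar>\<beta>\<bar>)"
    by (simp add: mult_le_cancel_left1)
  also have "\<dots> = s * (\<bar>t\<bar> * \<bar>\<beta>\<bar>)" by simp
  also have "\<dots> \<le> s * (pi / m)" using t\<beta> s by (intro mult_left_mono) auto
  finally have "\<bar>t\<bar> \<le> pi * s / m" by (simp add: mult.commute)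
  with t\<beta> show ?thesis using angle cos_int_2pin by metis
qed

lemma exists_steps_cos_pm_1:
  fixes m a \<beta> s :: real
  assumes m: "m > 0" and \<beta>: "1/s \<le> \<bar>\<beta>\<bar>" and s: "s > 0"
  obtains t1 t2 where "\<bar>t1\<bar> \<le> pi * s / m" "\<bar>t2\<bar> \<le> pi * s / m"
    "cos (m * (a + t1 * \<beta>)) = 1" "cos (m * (a + t2 * \<beta>)) = -1" "\<bar>t1 * \<beta> - t2 * \<beta>\<bar> \<le> 2 * pi / m"
proof -
  obtain t1 where t1: "\<bar>t1\<bar> * \<bar>\<beta>\<bar> \<le> pi / m" "\<bar>t1\<bar> \<le> pi * s / m" "cos (m * (a + t1 * \<beta>) + 0) = 1"
    using exists_short_step_cos_eq_1[OF assms] by blast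
  obtain t2 where t2: "\<bar>t2\<bar> * \<bar>\<beta>\<bar> \<le> pi / m" "\<bar>t2\<bar> \<le> pi * s / m" "cos (m * (a + t2 * \<beta>) + pi) = 1"
    using exists_short_step_cos_eq_1[OF assms] by blast
  have "\<bar>t1 * \<beta> - t2 * \<beta>\<bar> \<le> \<bar>t1\<bar> * \<bar>\<beta>\<bar> + \<bar>t2\<bar> * \<bar>\<beta>\<bar>"
    using abs_triangle_ineq4[of "t1 * \<beta>" "t2 * \<beta>"] by (simp add: abs_mult)
  then show ?thesis
    using that[of t1 t2] t1 t2 by (simp add: cos_periodic_pi)
qed

text \<open>The frequency \<open>M n\<close> is so large that along the segment the \<open>n\<close>-th cosine swings by \<open>2 c n\<close>
  over a step much shorter than the modulus of continuity of \<open>u\<close> and than the oscillation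
  scale of the earlier terms; the later terms contribute at most \<open>2 c n / 3\<close>.\<close>
lemma lacunary_perturbation_far_apart:
  fixes u :: "('i::finite \<Rightarrow> real) \<Rightarrow> real" and c :: "nat \<Rightarrow> real" and M :: "nat \<Rightarrow> nat"
    and s \<delta> :: real and n :: nat and k :: 'i and \<theta> v :: "'i \<Rightarrow> real"
  defines "U \<equiv> \<lambda>x. u x + lacunary_cos c M (x k)" and "m \<equiv> real (M n)"
  assumes cnn: "\<And>j. c j \<ge> 0" and sc: "summable c" and tail: "(\<Sum>j. c (j + Suc n)) \<le> c n / 3"
    and cn: "c n > 0" and s: "s \<ge> 0" and m: "m > 0" and \<delta>: "\<delta> > 0"
    and uc: "\<And>x y. sup_norm_fin (\<lambda>j. y j - x j) < \<delta> \<Longrightarrow> \<bar>u x - u y\<bar> < c n / 3"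
    and M2: "m > 2 * pi * (s * s) / \<delta>" and M3: "m \<ge> 6 * pi * (\<Sum>j<n. c j * real (M j)) / c n"
    and v: "\<And>j. \<bar>v j\<bar> \<le> s"
    and t: "\<bar>t1\<bar> \<le> pi * s / m" "\<bar>t2\<bar> \<le> pi * s / m"
    and cos1: "cos (m * (\<theta> k + t1 * v k)) = 1" and cos2: "cos (m * (\<theta> k + t2 * v k)) = -1"
    and dk: "\<bar>t1 * v k - t2 * v k\<bar> \<le> 2 * pi / m"
  shows "\<bar>U (\<lambda>j. \<theta> j + t1 * v j) - U (\<lambda>j. \<theta> j + t2 * v j)\<bar> > 2 * c n / 3"
proof -
  define y1 where "y1 = (\<lambda>j. \<theta> j + t1 * v j)"
  define y2 where "y2 = (\<lambda>j. \<theta> j + t2 * v j)"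
  define L where "L = (\<Sum>j<n. c j * real (M j))"
  have "sup_norm_fin (\<lambda>j. y2 j - y1 j) \<le> \<bar>t2 - t1\<bar> * s"
    using sup_norm_fin_scale_le[of v s "t2 - t1", OF v] unfolding y1_def y2_def
    by (simp add: algebra_simps)
  also have "\<dots> \<le> 2 * pi * (s * s) / m"
    using t s mult_right_mono[of "\<bar>t2 - t1\<bar>" "2 * pi * s / m" s] by (simp add: mult.assoc)
  also have "\<dots> < \<delta>"
    using M2 m \<delta> by (simp add: field_simps)
  finally have u_close: "\<bar>u y1 - u y2\<bar> < c n / 3" by (rule uc)
  have "L * \<bar>y1 k - y2 k\<bar> \<le> L * (2 * pi / m)"
    using dk unfolding y1_def y2_def L_def by (intro mult_left_mono sum_nonneg) (auto simp: cnn)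
  also have "\<dots> \<le> c n / 3"
    using M3 cn m unfolding L_def by (simp add: field_simps)
  finally have "c n \<le> lacunary_cos c M (y1 k) - lacunary_cos c M (y2 k)"
    using lacunary_cos_oscillation[OF cnn sc tail] cos1 cos2
    unfolding y1_def y2_def L_def m_def by simp
  then show ?thesis
    using u_close unfolding U_def y1_def y2_def abs_real_def by (auto split: if_split_asm)
qed

lemma steep_lacunary_perturbation:
  fixes u :: "('i::finite \<Rightarrow> real) \<Rightarrow> real" and c :: "nat \<Rightarrow> real" and M :: "nat \<Rightarrow> nat"
    and s \<delta> :: real and n :: nat and k :: 'i and \<theta> v :: "'i \<Rightarrow> real"
  defines "U \<equiv> \<lambda>x. u x + lacunary_cos c M (x k)"
  assumes cnn: "\<And>j. c j \<ge> 0" and sc: "summable c" and tail: "(\<Sum>j. c (j + Suc n)) \<le> c n / 3"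
    and cn: "c n > 0" and n: "n \<ge> 1" and s: "s \<ge> 1" and \<delta>: "\<delta> > 0"
    and uc: "\<And>x y. sup_norm_fin (\<lambda>j. y j - x j) < \<delta> \<Longrightarrow> \<bar>u x - u y\<bar> < c n / 3"
    and M1: "real (M n) > pi * s * n" and M2: "real (M n) > 2 * pi * (s * s) / \<delta>"
    and M3: "real (M n) \<ge> 6 * pi * (\<Sum>j<n. c j * real (M j)) / c n"
    and M4: "real (M n) \<ge> 6 * real n * pi * (s * s) / c n"
    and v1: "1/s \<le> \<bar>v k\<bar>" and v2: "\<And>j. \<bar>v j\<bar> \<le> s"
  shows "\<exists>t. - 1 / real n < t \<and> t < 1 / real n \<and>
            real n * sup_norm_fin (\<lambda>j. (\<theta> j + t * v j) - \<theta> j) < \<bar>U \<theta> - U (\<lambda>j. \<theta> j + t * v j)\<bar>"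
proof -
  define m where "m = real (M n)"
  have npos: "real n > 0" using n by simp
  have m: "m > 0" unfolding m_def using M1 s npos by (smt (verit) mult_pos_pos pi_gt_zero)
  obtain t1 t2 where t: "\<bar>t1\<bar> \<le> pi * s / m" "\<bar>t2\<bar> \<le> pi * s / m"
    and cos: "cos (m * (\<theta> k + t1 * v k)) = 1" "cos (m * (\<theta> k + t2 * v k)) = -1"
    and dk: "\<bar>t1 * v k - t2 * v k\<bar> \<le> 2 * pi / m"
    using exists_steps_cos_pm_1[OF m v1] s by auto
  have short: "- 1 / real n < t \<and> t < 1 / real n" if "\<bar>t\<bar> \<le> pi * s / m" for t
  proof -
    have "pi * s / m < 1 / real n"
      using M1 m npos unfolding m_def by (simp add: field_simps)
    then show ?thesis using that by (auto simp: abs_le_iff)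
  qed
  have slope: "real n * sup_norm_fin (\<lambda>j. (\<theta> j + t * v j) - \<theta> j) \<le> c n / 6"
    if "\<bar>t\<bar> \<le> pi * s / m" for t
  proof -
    have "sup_norm_fin (\<lambda>j. (\<theta> j + t * v j) - \<theta> j) \<le> \<bar>t\<bar> * s"
      using sup_norm_fin_scale_le[of v s t, OF v2] by simp
    also have "\<dots> \<le> pi * s / m * s"
      using that s by (intro mult_right_mono) auto
    finally have "real n * sup_norm_fin (\<lambda>j. (\<theta> j + t * v j) - \<theta> j) \<le> real n * (pi * s / m * s)"
      using npos by (intro mult_left_mono) auto
    also have "\<dots> \<le> c n / 6"
      using M4 cn m unfolding m_def by (simp add: field_simps)
    finally show ?thesis .
  qed
  have "\<bar>U (\<lambda>j. \<theta> j + t1 * v j) - U (\<lambda>j. \<theta> j + t2 * v j)\<bar> > 2 * c n / 3"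
    unfolding U_def using s m M2 M3 t cos dk unfolding m_def
    by (intro lacunary_perturbation_far_apart[OF cnn sc tail cn _ _ \<delta> uc _ _ v2]) auto
  then consider "c n / 6 < \<bar>U \<theta> - U (\<lambda>j. \<theta> j + t1 * v j)\<bar>"
    | "c n / 6 < \<bar>U \<theta> - U (\<lambda>j. \<theta> j + t2 * v j)\<bar>"
    by linarith
  then show ?thesis
    using short[OF t(1)] short[OF t(2)] slope[OF t(1)] slope[OF t(2)] by cases force+
qed

primrec partial_sum_feedback :: "(nat \<Rightarrow> real \<Rightarrow> nat) \<Rightarrow> (nat \<Rightarrow> real) \<Rightarrow> nat \<Rightarrow> real" where
  "partial_sum_feedback B c 0 = 0"
| "partial_sum_feedback B c (Suc m) =
     partial_sum_feedback B c m + c m * real (B m (partial_sum_feedback B c m))"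

lemma exists_seq_depending_on_partial_sums:
  "\<exists>M::nat \<Rightarrow> nat. \<forall>m. M m = B m (\<Sum>j<m. c j * real (M j))"
proof -
  define S where "S = partial_sum_feedback B c"
  define M where "M m = B m (S m)" for m
  have "S m = (\<Sum>j<m. c j * real (M j))" for m
  proof (induction m)
    case (Suc m)
    have "S (Suc m) = S m + c m * real (M m)" by (simp add: S_def M_def)
    with Suc show ?case by simp
  qed (simp add: S_def)
  then have "M m = B m (\<Sum>j<m. c j * real (M j))" for m
    unfolding M_def[of m] by simp
  then show ?thesis by blast
qed

definition steep_along :: "nat \<Rightarrow> 'i::finite \<Rightarrow> nat \<Rightarrow> (('i \<Rightarrow> real) \<Rightarrow> real) \<Rightarrow> bool" where
  "steep_along n k s u \<longleftrightarrow>
     (\<forall>\<theta> v. (1 / real s \<le> \<bar>v k\<bar> \<and> \<bar>v k\<bar> \<le> real s \<and> (\<forall>j. \<bar>v j\<bar> \<le> real s)) \<longrightarrow>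
       (\<exists>t. - 1 / real n < t \<and> t < 1 / real n \<and>
          (let y = (\<lambda>j. \<theta> j + t * v j) in
             \<bar>u \<theta> - u y\<bar> > real n * sup_norm_fin (\<lambda>j. y j - \<theta> j))))"

lemma D_set_iff:
  "u \<in> D_set n k s \<longleftrightarrow>
     continuous_on UNIV u \<and> (\<forall>\<theta> j. u (\<theta>(j := \<theta> j + 2 * pi)) = u \<theta>) \<and> steep_along n k s u"
  unfolding D_set_def steep_along_def by simp

lemma exists_frequencies_steep_along:
  fixes u :: "('i::finite \<Rightarrow> real) \<Rightarrow> real" and c :: "nat \<Rightarrow> real" and s :: nat and k :: 'i
  assumes cpos: "\<And>j. c j > 0" and sc: "summable c" and tail: "\<And>n. (\<Sum>j. c (j + Suc n)) \<le> c n / 3"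
    and s: "s \<ge> 1"
    and uc: "\<And>e. e > 0 \<Longrightarrow> \<exists>d>0. \<forall>x y. sup_norm_fin (\<lambda>j. y j - x j) < d \<longrightarrow> \<bar>u x - u y\<bar> < e"
  obtains M where "\<And>n. n \<ge> 1 \<Longrightarrow> steep_along n k s (\<lambda>\<theta>. u \<theta> + lacunary_cos c M (\<theta> k))"
proof -
  have "\<forall>n. \<exists>d>0. \<forall>x y. sup_norm_fin (\<lambda>j. y j - x j) < d \<longrightarrow> \<bar>u x - u y\<bar> < c n / 3"
    using uc cpos by (simp del: divide_const_simps)
  then obtain \<delta> where \<delta>: "\<And>n. \<delta> n > 0"
    "\<And>n x y. sup_norm_fin (\<lambda>j. y j - x j) < \<delta> n \<Longrightarrow> \<bar>u x - u y\<bar> < c n / 3"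
    by metis
  define B where "B n L = nat \<lceil>pi * s * n + 2 * pi * (s * s) / \<delta> n
      + 6 * pi * L / c n + 6 * real n * pi * (s * s) / c n\<rceil> + 1" for n L
  obtain M where M: "\<And>n. M n = B n (\<Sum>j<n. c j * real (M j))"
    using exists_seq_depending_on_partial_sums[of B c] by blast
  show ?thesis
  proof (rule that)
    fix n :: nat assume n: "n \<ge> 1"
    let ?L = "\<Sum>j<n. c j * real (M j)"
    have "pi * s * n + 2 * pi * (s * s) / \<delta> n + 6 * pi * ?L / c n
        + 6 * real n * pi * (s * s) / c n + 1 \<le> real (M n)"
      using M[of n] unfolding B_def by linarith
    moreover have "pi * s * n \<ge> 0" "2 * pi * (s * s) / \<delta> n \<ge> 0" "6 * pi * ?L / c n \<ge> 0"
      "6 * real n * pi * (s * s) / c n \<ge> 0"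
      using \<delta>(1)[of n] cpos[of n] sum_nonneg[of "{..<n}" "\<lambda>j. c j * real (M j)"] cpos
      by (auto simp: less_imp_le)
    ultimately have "real (M n) > pi * s * n" "real (M n) > 2 * pi * (s * s) / \<delta> n"
      "real (M n) \<ge> 6 * pi * ?L / c n" "real (M n) \<ge> 6 * real n * pi * (s * s) / c n"
      by linarith+
    then show "steep_along n k s (\<lambda>\<theta>. u \<theta> + lacunary_cos c M (\<theta> k))"
      unfolding steep_along_def Let_def
      using steep_lacunary_perturbation[where c = c and M = M and s = "real s" and \<delta> = "\<delta> n"
          and u = u and n = n and k = k] cpos sc tail s \<delta> n by (simp add: less_imp_le)
  qed
qed

section \<open>Lacunary power series\<close>

definition lacunary_series :: "(nat \<Rightarrow> real) \<Rightarrow> (nat \<Rightarrow> nat) \<Rightarrow> complex \<Rightarrow> complex" where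
  "lacunary_series c M w = (\<Sum>j. complex_of_real (c j) * w ^ M j)"

lemma norm_lacunary_series_term_le:
  assumes "c j \<ge> 0" "norm w \<le> 1"
  shows "norm (complex_of_real (c j) * w ^ M j) \<le> c j"
proof -
  have "norm w ^ M j \<le> 1" using assms(2) by (simp add: power_le_one)
  then show ?thesis using assms(1) by (simp add: norm_mult norm_power mult_left_le)
qed

lemma lacunary_series_disc_algebra:
  assumes sc: "summable c" and cnn: "\<And>j. c j \<ge> 0"
  shows "continuous_on (cball 0 1) (lacunary_series c M)" "lacunary_series c M holomorphic_on ball 0 1"
proof -
  have "\<forall>\<^sub>F n in sequentially.
      continuous_on (cball 0 1) (\<lambda>w. \<Sum>j<n. complex_of_real (c j) * w ^ M j) \<and>
      (\<lambda>w. \<Sum>j<n. complex_of_real (c j) * w ^ M j) holomorphic_on ball 0 1"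
    by (intro always_eventually allI conjI continuous_intros holomorphic_intros)
  moreover have "uniform_limit (cball 0 1) (\<lambda>n w. \<Sum>j<n. complex_of_real (c j) * w ^ M j)
      (lacunary_series c M) sequentially"
    unfolding lacunary_series_def
    by (rule Weierstrass_m_test[OF _ sc]) (auto intro!: norm_lacunary_series_term_le cnn)
  ultimately obtain "continuous_on (cball 0 1) (lacunary_series c M)"
    "lacunary_series c M holomorphic_on ball 0 1"
    by (rule holomorphic_uniform_limit) simp
  then show "continuous_on (cball 0 1) (lacunary_series c M)"
    "lacunary_series c M holomorphic_on ball 0 1" by auto
qed

lemma norm_lacunary_series_le:
  assumes "summable c" "\<And>j. c j \<ge> 0" "w \<in> cball 0 1"
  shows "norm (lacunary_series c M w) \<le> suminf c"
  unfolding lacunary_series_def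
  by (rule norm_suminf_le[OF _ assms(1)]) (use assms in \<open>auto intro!: norm_lacunary_series_term_le\<close>)

lemma Re_lacunary_series_cis:
  assumes sc: "summable c" "\<And>j. c j \<ge> 0"
  shows "Re (lacunary_series c M (cis a)) = lacunary_cos c M a"
proof -
  have "summable (\<lambda>j. complex_of_real (c j) * cis a ^ M j)"
    by (rule summable_comparison_test'[OF sc(1)]) (use sc in \<open>auto intro!: norm_lacunary_series_term_le\<close>)
  moreover have "Re (cis a ^ m) = cos (real m * a)" for m by (subst Complex.DeMoivre) simp
  ultimately show ?thesis
    unfolding lacunary_series_def lacunary_cos_def by (simp add: Re_suminf)
qed

section \<open>Riemann maps of the complementary components\<close>

lemma compact_disc_part_avoiding_pole:
  fixes \<phi> :: "complex \<Rightarrow> complex"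
  assumes p: "p \<in> ball 0 1" and lim: "filterlim \<phi> at_infinity (at p)"
    and bB: "bounded B" and BU: "B \<subseteq> \<phi> ` (cball 0 1 - {p})"
  obtains C where "compact C" "C \<subseteq> cball 0 1 - {p}" "sphere 0 1 \<subseteq> C" "B \<subseteq> \<phi> ` C"
proof -
  obtain R where R: "\<And>z. z \<in> B \<Longrightarrow> norm z \<le> R" "R \<ge> 0"
    using bB unfolding bounded_iff by (metis norm_ge_zero order_trans linorder_linear)
  have "\<forall>\<^sub>F x in at p. R + 1 \<le> norm (\<phi> x)"
    using lim R(2) unfolding filterlim_at_infinity[OF R(2)] by auto
  then obtain d where d: "d > 0" and far: "\<And>x. x \<noteq> p \<Longrightarrow> dist x p < d \<Longrightarrow> R + 1 \<le> norm (\<phi> x)"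
    unfolding eventually_at by auto
  define d' where "d' = min d ((1 - norm p) / 2)"
  have "d' \<le> (1 - norm p) / 2" unfolding d'_def by (rule min.cobounded2)
  moreover have "norm p < 1" using p by simp
  ultimately have d': "d' > 0" "d' \<le> d" "d' < 1 - norm p" using d by (auto simp: d'_def)
  show ?thesis
  proof (rule that[of "cball 0 1 - ball p d'"])
    show "compact (cball 0 1 - ball p d')" by (intro compact_diff) auto
    show "cball 0 1 - ball p d' \<subseteq> cball 0 1 - {p}" using d' by auto
    show "sphere 0 1 \<subseteq> cball 0 1 - ball p d'"
    proof
      fix w :: complex assume w: "w \<in> sphere 0 1"
      have "norm w \<le> norm p + dist w p" by (simp add: dist_norm norm_triangle_sub)
      then show "w \<in> cball 0 1 - ball p d'" using w d' by (simp add: dist_commute)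
    qed
    show "B \<subseteq> \<phi> ` (cball 0 1 - ball p d')"
    proof
      fix z assume z: "z \<in> B"
      then obtain w where w: "w \<in> cball 0 1 - {p}" "z = \<phi> w" using BU by blast
      have "w \<notin> ball p d'"
      proof
        assume "w \<in> ball p d'"
        then have "R + 1 \<le> norm z" using far[of w] w d' by (simp add: dist_commute)
        then show False using R(1)[OF z] by simp
      qed
      then show "z \<in> \<phi> ` (cball 0 1 - ball p d')" using w by auto
    qed
  qed
qed

text \<open>Uniform access to both cases of \<open>riemann_map_closed\<close>: \<open>D\<close> is the closed disc, with the
  preimage of \<open>\<infinity>\<close> removed if \<open>U\<close> is unbounded, and \<open>C \<subseteq> D\<close> is a compact piece containing the
  unit circle and the preimage of the given bounded set \<open>B\<close>.\<close>
lemma riemann_map_closed_compact_part: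
  fixes \<phi> :: "complex \<Rightarrow> complex"
  assumes rm: "riemann_map_closed \<phi> U" and bB: "bounded B" and BU: "B \<subseteq> closure U"
  obtains D S C where "continuous_on D \<phi>" "inj_on \<phi> D" "\<phi> ` D = closure U" "S \<subseteq> D"
    "open S" "\<phi> holomorphic_on S" "\<phi> ` S = U" "S \<subseteq> ball 0 1" "compact C" "C \<subseteq> D"
    "sphere 0 1 \<subseteq> C" "C \<subseteq> cball 0 1" "B \<subseteq> \<phi> ` C"
proof (cases "bounded U")
  case True
  then show ?thesis using rm BU unfolding riemann_map_closed_def
    by (intro that[of "cball 0 1" "ball 0 1" "cball 0 1"]) auto
next
  case False
  then obtain p where p: "p \<in> ball 0 1" and maps: "continuous_on (cball 0 1 - {p}) \<phi>"
    "inj_on \<phi> (cball 0 1 - {p})" "\<phi> ` (cball 0 1 - {p}) = closure U"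
    "\<phi> holomorphic_on (ball 0 1 - {p})" "\<phi> ` (ball 0 1 - {p}) = U"
    and lim: "filterlim \<phi> at_infinity (at p)"
    using rm unfolding riemann_map_closed_def by blast
  have "B \<subseteq> \<phi> ` (cball 0 1 - {p})" using BU maps(3) by simp
  then obtain C where C: "compact C" "C \<subseteq> cball 0 1 - {p}" "sphere 0 1 \<subseteq> C" "B \<subseteq> \<phi> ` C"
    using compact_disc_part_avoiding_pole[OF p lim bB] by blast
  show ?thesis
  proof (rule that[of "cball 0 1 - {p}" "ball 0 1 - {p}" C])
    show "open (ball 0 1 - {p})" by (simp add: open_delete)
    show "C \<subseteq> cball 0 1" using C(2) by blast
  qed (use maps C in auto)
qed

lemma riemann_map_closed_circle:
  fixes \<phi> :: "complex \<Rightarrow> complex"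
  assumes rm: "riemann_map_closed \<phi> U" and oU: "open U"
  shows "continuous_on (sphere 0 1) \<phi>" "\<phi> ` sphere 0 1 \<subseteq> frontier U"
proof -
  obtain D S C where D: "continuous_on D \<phi>" "inj_on \<phi> D" "\<phi> ` D = closure U" "S \<subseteq> D" "open S"
    "\<phi> holomorphic_on S" "\<phi> ` S = U" "S \<subseteq> ball 0 1" "compact C" "C \<subseteq> D" "sphere 0 1 \<subseteq> C"
    using riemann_map_closed_compact_part[OF rm, of "{}"] by (metis bounded_empty empty_subsetI)
  show "continuous_on (sphere 0 1) \<phi>" using D by (meson continuous_on_subset order_trans)
  show "\<phi> ` sphere 0 1 \<subseteq> frontier U"
  proof
    fix z assume "z \<in> \<phi> ` sphere 0 1"
    then obtain w where w: "w \<in> sphere 0 1" "z = \<phi> w" by auto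
    have wD: "w \<in> D" using w D by auto
    have "z \<in> closure U" using w wD D(3) by auto
    moreover have "z \<notin> U"
    proof
      assume "z \<in> U"
      then obtain w' where w': "w' \<in> S" "z = \<phi> w'" using D(7) by auto
      then have "w' = w" using D(2) D(4) wD w by (metis inj_onD subsetD)
      then show False using w' w D(8) by auto
    qed
    ultimately show "z \<in> frontier U" using oU by (simp add: frontier_def interior_open)
  qed
qed

text \<open>\<open>\<psi>\<close> inverts \<open>\<phi>\<close> on the compact part \<open>C\<close>, hence is continuous; on \<open>W\<close> it agrees with
  the holomorphic inverse of \<open>\<phi>\<close> on the open disc part \<open>S\<close>.\<close>
lemma riemann_map_closed_boundary_inverse:
  fixes \<phi> :: "complex \<Rightarrow> complex"
  assumes rm: "riemann_map_closed \<phi> U" and oU: "open U" and bW: "bounded W" and WU: "W \<subseteq> U"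
  obtains \<psi> where "continuous_on (closure W) \<psi>" "\<psi> holomorphic_on W" "\<psi> ` W \<subseteq> ball 0 1"
    "\<psi> ` closure W \<subseteq> cball 0 1" "\<And>w. w \<in> sphere 0 1 \<Longrightarrow> \<phi> w \<in> closure W \<Longrightarrow> \<psi> (\<phi> w) = w"
proof -
  have bc: "bounded (closure W)" using bW by (rule bounded_closure)
  have cU: "closure W \<subseteq> closure U" using WU by (rule closure_mono)
  obtain D S C where D: "continuous_on D \<phi>" "inj_on \<phi> D" "\<phi> ` D = closure U" "S \<subseteq> D" "open S"
    "\<phi> holomorphic_on S" "\<phi> ` S = U" "S \<subseteq> ball 0 1" "compact C" "C \<subseteq> D" "sphere 0 1 \<subseteq> C"
    "C \<subseteq> cball 0 1" "closure W \<subseteq> \<phi> ` C"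
    using riemann_map_closed_compact_part[OF rm bc cU] by blast
  define \<psi> where "\<psi> = inv_into C \<phi>"
  have iC: "inj_on \<phi> C" using D(2,10) inj_on_subset by blast
  have cont: "continuous_on (\<phi> ` C) \<psi>"
    unfolding \<psi>_def by (rule continuous_on_inv[OF continuous_on_subset[OF D(1) D(10)] D(9)])
      (use iC in auto)
  obtain g where g: "g holomorphic_on (\<phi> ` S)" "\<And>z. z \<in> S \<Longrightarrow> g (\<phi> z) = z"
    using holomorphic_has_inverse[OF D(6) D(5) inj_on_subset[OF D(2) D(4)]] by metis
  have eqg: "\<psi> z = g z \<and> \<psi> z \<in> S" if z: "z \<in> W" for z
  proof -
    obtain w where w: "w \<in> S" "z = \<phi> w" using z WU D(7) by auto
    have zC: "z \<in> \<phi> ` C" using z D(13) closure_subset by blast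
    have "\<psi> z \<in> C" unfolding \<psi>_def using zC by (rule inv_into_into)
    moreover have "\<phi> (\<psi> z) = z" unfolding \<psi>_def using zC by (rule f_inv_into_f)
    ultimately have "\<psi> z = w" using w D(2,4,10) by (metis inj_onD subsetD)
    then show ?thesis using g(2) w by auto
  qed
  show ?thesis
  proof
    show "continuous_on (closure W) \<psi>" using cont D(13) continuous_on_subset by blast
    show "\<psi> holomorphic_on W"
      by (rule holomorphic_transform[of g]) (use holomorphic_on_subset[OF g(1)] WU D(7) eqg in auto)
    show "\<psi> ` W \<subseteq> ball 0 1" using eqg D(8) by blast
    show "\<psi> ` closure W \<subseteq> cball 0 1"
      using D(12,13) unfolding \<psi>_def by (auto intro!: inv_into_into[THEN subsetD[OF D(12)]])
    fix w assume "w \<in> sphere 0 1" "\<phi> w \<in> closure W"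
    then show "\<psi> (\<phi> w) = w" unfolding \<psi>_def using D(11) iC by (auto intro: inv_into_f_f)
  qed
qed

section \<open>Boundary values on the torus\<close>

lemma component_complement_closure:
  fixes \<Omega> V :: "complex set"
  assumes o\<Omega>: "open \<Omega>" and V: "V \<in> components (- closure \<Omega>)"
  shows "\<Omega> \<subseteq> - closure V" "frontier (- closure V) \<subseteq> closure \<Omega>"
proof -
  have "V \<subseteq> - closure \<Omega>" using V in_components_subset by blast
  then have "\<Omega> \<inter> V = {}" using closure_subset by blast
  then show "\<Omega> \<subseteq> - closure V" using open_Int_closure_eq_empty[OF o\<Omega>] by blast
  have "frontier (- closure V) = frontier (closure V)" by (rule frontier_complement)
  also have "\<dots> \<subseteq> frontier V"
    unfolding frontier_def using interior_mono[OF closure_subset[of V]] by auto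
  also have "\<dots> \<subseteq> closure \<Omega>"
    by (rule frontier_of_components_closed_complement[OF closed_closure V])
  finally show "frontier (- closure V) \<subseteq> closure \<Omega>" .
qed

lemma A_space_add_coordinate:
  assumes f: "f \<in> A_space \<Omega>"
    and h: "continuous_on (closure (\<Omega> k)) h" "h holomorphic_on \<Omega> k"
  shows "(\<lambda>z. f z + h (z k)) \<in> A_space \<Omega>"
  unfolding A_space_def
proof (intro CollectI conjI ballI allI)
  have "continuous_on (Pi UNIV (\<lambda>i. closure (\<Omega> i))) (\<lambda>z. h (z k))"
    by (rule continuous_on_compose2[OF h(1) continuous_on_subset[OF continuous_on_product_coordinates]])
      auto
  then show "continuous_on (Pi UNIV (\<lambda>i. closure (\<Omega> i))) (\<lambda>z. f z + h (z k))"
    using f unfolding A_space_def by (intro continuous_intros) auto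
next
  fix z i0 assume z: "z \<in> Pi UNIV \<Omega>"
  have "(\<lambda>w. h ((z(i0 := w)) k)) holomorphic_on \<Omega> i0"
    using h(2) by (cases "i0 = k") simp_all
  moreover have "(\<lambda>w. f (z(i0 := w))) holomorphic_on \<Omega> i0" using f z unfolding A_space_def by auto
  ultimately show "(\<lambda>w. f (z(i0 := w)) + h ((z(i0 := w)) k)) holomorphic_on \<Omega> i0"
    by (intro holomorphic_on_add)
qed

lemma phi_r_T_eq: "phi_r_T \<phi> r \<theta> = (\<lambda>i. \<phi> i (r i) (cis (\<theta> i)))"
  by (simp add: phi_r_T_def cis_conv_exp)

lemma phi_r_T_periodic: "phi_r_T \<phi> r (\<theta>(j := \<theta> j + 2 * pi)) = phi_r_T \<phi> r \<theta>"
proof -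
  have "cis (x + 2 * pi) = cis x" for x by (simp add: complex_eq_iff)
  then show ?thesis by (auto simp: phi_r_T_eq)
qed

lemma continuous_on_torus_boundary_values:
  fixes \<Omega> :: "'i::finite \<Rightarrow> complex set"
  assumes circ: "\<And>i. continuous_on (sphere 0 1) (\<phi> i (r i))"
      "\<And>i w. w \<in> sphere 0 1 \<Longrightarrow> \<phi> i (r i) w \<in> closure (\<Omega> i)"
    and h: "h \<in> A_space \<Omega>"
  shows "continuous_on (Pi UNIV (\<lambda>i. sphere 0 1)) (\<lambda>\<zeta>. Re (h (\<lambda>i. \<phi> i (r i) (\<zeta> i))))"
proof -
  have \<Phi>: "continuous_on (Pi UNIV (\<lambda>i. sphere 0 1)) (\<lambda>\<zeta>. \<lambda>i. \<phi> i (r i) (\<zeta> i))"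
    by (intro continuous_on_coordinatewise_then_product continuous_on_compose2[OF circ(1)
          continuous_on_subset[OF continuous_on_product_coordinates]]) auto
  have hc: "continuous_on (Pi UNIV (\<lambda>i. closure (\<Omega> i))) h"
    using h unfolding A_space_def by auto
  have "(\<lambda>\<zeta>. \<lambda>i. \<phi> i (r i) (\<zeta> i)) ` Pi UNIV (\<lambda>i. sphere 0 1) \<subseteq> Pi UNIV (\<lambda>i. closure (\<Omega> i))"
    by (auto simp: Pi_iff intro!: circ(2))
  then show ?thesis
    by (intro continuous_intros continuous_on_compose2[OF hc \<Phi>])
qed

lemma continuous_on_Re_phi_r_T:
  fixes \<Omega> :: "'i::finite \<Rightarrow> complex set"
  assumes "\<And>i. continuous_on (sphere 0 1) (\<phi> i (r i))"
      "\<And>i w. w \<in> sphere 0 1 \<Longrightarrow> \<phi> i (r i) w \<in> closure (\<Omega> i)"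
    and "h \<in> A_space \<Omega>"
  shows "continuous_on UNIV (\<lambda>\<theta>. Re (h (phi_r_T \<phi> r \<theta>)))"
proof -
  have cis: "continuous_on UNIV (\<lambda>\<theta>::'i \<Rightarrow> real. \<lambda>i. cis (\<theta> i))"
    by (intro continuous_on_coordinatewise_then_product continuous_on_compose2[OF continuous_on_cis
          continuous_on_product_coordinates]) auto
  have "range (\<lambda>\<theta>::'i \<Rightarrow> real. \<lambda>i. cis (\<theta> i)) \<subseteq> Pi UNIV (\<lambda>i. sphere 0 1)"
    by auto
  from continuous_on_compose2[OF continuous_on_torus_boundary_values[where \<phi> = \<phi> and r = r and
        \<Omega> = \<Omega>, OF assms] cis this]
  show ?thesis unfolding phi_r_T_eq .
qed

lemma uniformly_continuous_Re_phi_r_T: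
  fixes \<Omega> :: "'i::finite \<Rightarrow> complex set"
  assumes "\<And>i. continuous_on (sphere 0 1) (\<phi> i (r i))"
      "\<And>i w. w \<in> sphere 0 1 \<Longrightarrow> \<phi> i (r i) w \<in> closure (\<Omega> i)"
    and "h \<in> A_space \<Omega>" and "e > 0"
  shows "\<exists>d>0. \<forall>x y. sup_norm_fin (\<lambda>j. y j - x j) < d \<longrightarrow>
           \<bar>Re (h (phi_r_T \<phi> r x)) - Re (h (phi_r_T \<phi> r y))\<bar> < e"
  using uniformly_continuous_on_torus_angles[OF
      continuous_on_torus_boundary_values[where \<phi> = \<phi> and r = r and \<Omega> = \<Omega>, OF assms(1-3)] assms(4)]
  unfolding phi_r_T_eq by simp

lemma lacunary_perturbation_in_S_set:
  fixes \<Omega> :: "'i::finite \<Rightarrow> complex set" and \<psi> :: "complex \<Rightarrow> complex"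
  assumes f: "f \<in> A_space \<Omega>"
    and circ: "\<And>i. continuous_on (sphere 0 1) (\<phi> i (r i))"
      "\<And>i w. w \<in> sphere 0 1 \<Longrightarrow> \<phi> i (r i) w \<in> closure (\<Omega> i)"
    and \<psi>: "continuous_on (closure (\<Omega> k)) \<psi>" "\<psi> holomorphic_on \<Omega> k" "\<psi> ` \<Omega> k \<subseteq> ball 0 1"
      "\<psi> ` closure (\<Omega> k) \<subseteq> cball 0 1" "\<And>w. w \<in> sphere 0 1 \<Longrightarrow> \<psi> (\<phi> k (r k) w) = w"
    and c: "summable c" "\<And>j. c j \<ge> 0"
    and steep: "\<And>n. n \<ge> 1 \<Longrightarrow>
      steep_along n k s (\<lambda>\<theta>. Re (f (phi_r_T \<phi> r \<theta>)) + lacunary_cos c M (\<theta> k))"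
  shows "(\<lambda>z. f z + lacunary_series c M (\<psi> (z k))) \<in> S_set \<Omega> \<phi> r k s"
proof -
  define g where "g z = f z + lacunary_series c M (\<psi> (z k))" for z
  have "continuous_on (closure (\<Omega> k)) (\<lambda>w. lacunary_series c M (\<psi> w))"
    by (rule continuous_on_compose2[OF lacunary_series_disc_algebra(1)[OF c] \<psi>(1,4)])
  moreover have "(\<lambda>w. lacunary_series c M (\<psi> w)) holomorphic_on \<Omega> k"
    using holomorphic_on_compose_gen[OF \<psi>(2) lacunary_series_disc_algebra(2)[OF c] \<psi>(3)]
    by (simp add: o_def)
  ultimately have g: "g \<in> A_space \<Omega>"
    unfolding g_def using A_space_add_coordinate[OF f] by blast
  have Re_g: "Re (g (phi_r_T \<phi> r \<theta>)) = Re (f (phi_r_T \<phi> r \<theta>)) + lacunary_cos c M (\<theta> k)" for \<theta>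
    using \<psi>(5)[of "cis (\<theta> k)"] Re_lacunary_series_cis[OF c]
    by (simp add: g_def phi_r_T_eq)
  have "(\<lambda>\<theta>. Re (g (phi_r_T \<phi> r \<theta>))) \<in> D_set n k s" if "n \<ge> 1" for n
  proof -
    have "Re (g (phi_r_T \<phi> r (\<theta>(j := \<theta> j + 2 * pi)))) = Re (g (phi_r_T \<phi> r \<theta>))" for \<theta> j
      by (simp only: phi_r_T_periodic)
    then show ?thesis
      using continuous_on_Re_phi_r_T[where \<phi> = \<phi> and r = r, OF circ g] steep[OF that]
      unfolding D_set_iff Re_g by auto
  qed
  with g show ?thesis
    unfolding S_set_def E_set_def g_def[symmetric] by auto
qed

lemma boundary_maps_of_complement_components:
  fixes \<Omega> :: "'i \<Rightarrow> complex set" and \<phi> :: "'i \<Rightarrow> nat \<Rightarrow> complex \<Rightarrow> complex"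
  assumes \<Omega>: "\<And>i. open (\<Omega> i)" "\<And>i. bounded (\<Omega> i)"
    and V: "\<And>i. V i (r i) \<in> components (- closure (\<Omega> i))"
    and rm: "\<And>i. riemann_map_closed (\<phi> i (r i)) (- closure (V i (r i)))"
  obtains \<psi> where "\<And>i. continuous_on (sphere 0 1) (\<phi> i (r i))"
    "\<And>i w. w \<in> sphere 0 1 \<Longrightarrow> \<phi> i (r i) w \<in> closure (\<Omega> i)"
    "continuous_on (closure (\<Omega> k)) \<psi>" "\<psi> holomorphic_on \<Omega> k" "\<psi> ` \<Omega> k \<subseteq> ball 0 1"
    "\<psi> ` closure (\<Omega> k) \<subseteq> cball 0 1" "\<And>w. w \<in> sphere 0 1 \<Longrightarrow> \<psi> (\<phi> k (r k) w) = w"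
proof -
  note side = component_complement_closure[OF \<Omega>(1) V]
  have circ: "continuous_on (sphere 0 1) (\<phi> i (r i))"
    "\<And>w. w \<in> sphere 0 1 \<Longrightarrow> \<phi> i (r i) w \<in> closure (\<Omega> i)" for i
    using riemann_map_closed_circle[OF rm open_Compl[OF closed_closure]] side(2) by blast+
  obtain \<psi> where "continuous_on (closure (\<Omega> k)) \<psi>" "\<psi> holomorphic_on \<Omega> k" "\<psi> ` \<Omega> k \<subseteq> ball 0 1"
    "\<psi> ` closure (\<Omega> k) \<subseteq> cball 0 1" "\<And>w. w \<in> sphere 0 1 \<Longrightarrow> \<psi> (\<phi> k (r k) w) = w"
    using riemann_map_closed_boundary_inverse[OF rm open_Compl[OF closed_closure] \<Omega>(2) side(1)]
      circ(2) by metis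
  with circ show ?thesis using that by blast
qed

theorem lemma5p3:
  fixes \<Omega> :: "'i::finite \<Rightarrow> complex set"
    and kk :: "'i \<Rightarrow> nat"
    and V :: "'i \<Rightarrow> nat \<Rightarrow> complex set"
    and \<phi> :: "'i \<Rightarrow> nat \<Rightarrow> complex \<Rightarrow> complex"
    and r :: "'i \<Rightarrow> nat" and k :: 'i and s :: nat
  assumes dom: "\<And>i. bdd_domain_jordan_bdry (\<Omega> i) (kk i)"
    and comps: "\<And>i. V i ` {..<kk i} = components (- closure (\<Omega> i))"
    and comps_inj: "\<And>i. inj_on (V i) {..<kk i}"
    and riem: "\<And>i j. j < kk i \<Longrightarrow> riemann_map_closed (\<phi> i j) (- closure (V i j))"
    and r: "\<And>i. r i < kk i"
    and s: "s \<ge> 1"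
  shows "\<forall>f\<in>A_space \<Omega>. \<forall>\<epsilon>>0. \<exists>g\<in>S_set \<Omega> \<phi> r k s.
           \<forall>z\<in>Pi UNIV (\<lambda>i. closure (\<Omega> i)). norm (f z - g z) < \<epsilon>"
proof (intro ballI allI impI)
  fix f :: "('i \<Rightarrow> complex) \<Rightarrow> complex" and \<epsilon> :: real
  assume f: "f \<in> A_space \<Omega>" and \<epsilon>: "\<epsilon> > 0"
  have \<Omega>: "open (\<Omega> i)" "bounded (\<Omega> i)" for i
    using dom[of i] unfolding bdd_domain_jordan_bdry_def by auto
  have V: "V i (r i) \<in> components (- closure (\<Omega> i))" for i
    using comps[of i] r[of i] by blast
  obtain \<psi> where circ: "\<And>i. continuous_on (sphere 0 1) (\<phi> i (r i))"
      "\<And>i w. w \<in> sphere 0 1 \<Longrightarrow> \<phi> i (r i) w \<in> closure (\<Omega> i)"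
    and \<psi>: "continuous_on (closure (\<Omega> k)) \<psi>" "\<psi> holomorphic_on \<Omega> k" "\<psi> ` \<Omega> k \<subseteq> ball 0 1"
      "\<psi> ` closure (\<Omega> k) \<subseteq> cball 0 1" "\<And>w. w \<in> sphere 0 1 \<Longrightarrow> \<psi> (\<phi> k (r k) w) = w"
    using boundary_maps_of_complement_components[where \<phi> = \<phi> and r = r and k = k and V = V and \<Omega> = \<Omega>,
        OF \<Omega> V riem[OF r]] by metis
  define c where "c j = \<epsilon>/2 * (1/4)^j" for j :: nat
  have c: "summable c" "suminf c = 2 * \<epsilon> / 3" "\<And>n. (\<Sum>j. c (j + Suc n)) \<le> c n / 3" "\<And>j. c j > 0"
    using geometric_weights[of \<epsilon>] \<epsilon> unfolding c_def by auto
  obtain M where steep: "\<And>n. n \<ge> 1 \<Longrightarrow>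
      steep_along n k s (\<lambda>\<theta>. Re (f (phi_r_T \<phi> r \<theta>)) + lacunary_cos c M (\<theta> k))"
    using exists_frequencies_steep_along[OF c(4,1,3) s
        uniformly_continuous_Re_phi_r_T[where \<phi> = \<phi> and r = r, OF circ f]] by blast
  have "norm (lacunary_series c M (\<psi> (z k))) < \<epsilon>" if "z \<in> Pi UNIV (\<lambda>i. closure (\<Omega> i))" for z
    using norm_lacunary_series_le[OF c(1) less_imp_le[OF c(4)], of "\<psi> (z k)" M] \<psi>(4) that c(2) \<epsilon>
    by (force simp: Pi_iff)
  then show "\<exists>g\<in>S_set \<Omega> \<phi> r k s. \<forall>z\<in>Pi UNIV (\<lambda>i. closure (\<Omega> i)). norm (f z - g z) < \<epsilon>"
    using lacunary_perturbation_in_S_set[OF f circ \<psi> c(1) less_imp_le[OF c(4)] steep] by force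
qed

end
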